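(* Let $n,m,p$ be positive integers with $m\le n$. Let $b_1,\dots,b_m\in\mathbb{R}^n$ be column vectors with nonnegative integer entries $b_{kj}$ such that the $n\times m$ matrix $B=[b_1,\dots,b_m]$ has rank $m$ and no zero row. Let $A=[a_{ij}]$ be an irreducible $m\times m$ matrix with nonnegative entries, and define $f:\mathbb{R}^n\to\mathbb{R}^n$ by $f(x)=\sum_{i=1}^m\sum_{j=1}^m a_{ij}\,x_1^{b_{1j}}\cdots x_n^{b_{nj}}\,(b_i-b_j)$. Let $C=[c_{ij}]$ be a $p\times n$ matrix each of whose entries is either $0$ or a real number $\ge1$, and define $h:\mathbb{R}^n\to\mathbb{R}^p$ by $h_i(x)=|x_1|^{c_{i1}}\cdots|x_n|^{c_{in}}$. Let $\mathcal{D}=\mathrm{span}\{b_i-b_j: i,j=1,\dots,m\}$, and assume there are no boundary equilibria: whenever $x\in\mathbb{R}^n_{\ge0}$ has some zero coordinate and $x-\bar x\in\mathcal{D}$ for some $\bar x\in\mathbb{R}^n_{>0}$, then $f(x)\neq0$. Let $E_+=\{x\in\mathbb{R}^n_{>0}: f(x)=0\}$ and $\rho(x)=(\ln x_1,\dots,\ln x_n)'$ for $x\in\mathbb{R}^n_{>0}$. Then the following are equivalent: (a) the system $\dot x=f(x)$, $y=h(x)$ is detectable on $\mathbb{R}^n_{>0}$; (b) for all $x,z\in\mathbb{R}^n_{>0}$, if $\rho(x)-\rho(z)\in\ker C$ and $x,z\in E_+$, then $x=z$; (c) $\mathcal{D}^\perp\cap\ker C=\{0\}$; (d) $\mathcal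{D}+\operatorname{im}C'=\mathbb{R}^n$.
   Context: The system is detectable on $\mathbb{R}^n_{>0}$ if for every two trajectories $x(\cdot),z(\cdot)$ of $\dot x=f(x)$ in $\mathbb{R}^n_{>0}$ defined for all $t\ge0$, $h(x(t))\equiv h(z(t))$ implies $|x(t)-z(t)|\to0$ as $t\to\infty$. $C'$ denotes the transpose of $C$; $\mathcal{D}^\perp$ is the orthogonal complement in $\mathbb{R}^n$. *)

theory Defs
  imports "HOL-Analysis.Analysis"
begin

definition pos_orthant :: "(real^'n) set" where
  "pos_orthant = {x. \<forall>k. x $ k > 0}"

definition nonneg_orthant :: "(real^'n) set" where
  "nonneg_orthant = {x. \<forall>k. x $ k \<ge> 0}"

definition realB :: "nat^'m^'n \<Rightarrow> real^'m^'n" where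
  "realB B = (\<chi> k j. real (B $ k $ j))"

definition bcol :: "nat^'m^'n \<Rightarrow> 'm \<Rightarrow> real^'n" where
  "bcol B j = column j (realB B)"

text \<open>Irreducibility of a square matrix: the directed graph with an edge i -> j whenever
  a_ij \<noteq> 0 is strongly connected.\<close>
definition irreducible_matrix :: "real^'m^'m \<Rightarrow> bool" where
  "irreducible_matrix A \<longleftrightarrow> (\<forall>i j. (i, j) \<in> {(i, j). A $ i $ j \<noteq> 0}\<^sup>*)"

definition monom :: "nat^'m^'n \<Rightarrow> 'm \<Rightarrow> real^'n \<Rightarrow> real" where
  "monom B j x = (\<Prod>k\<in>UNIV. (x $ k) ^ (B $ k $ j))"

definition mak_field :: "real^'m^'m \<Rightarrow> nat^'m^'n \<Rightarrow> real^'n \<Rightarrow> real^'n" where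
  "mak_field A B x = (\<Sum>i\<in>UNIV. \<Sum>j\<in>UNIV. (A $ i $ j * monom B j x) *\<^sub>R (bcol B i - bcol B j))"

text \<open>|t|^c with the convention |t|^0 = 1 (note that Isabelle's powr has 0 powr 0 = 0).\<close>
definition abs_pow :: "real \<Rightarrow> real \<Rightarrow> real" where
  "abs_pow t c = (if c = 0 then 1 else \<bar>t\<bar> powr c)"

definition out_map :: "real^'n^'p \<Rightarrow> real^'n \<Rightarrow> real^'p" where
  "out_map C x = (\<chi> i. \<Prod>k\<in>UNIV. abs_pow (x $ k) (C $ i $ k))"

definition stoich_space :: "nat^'m^'n \<Rightarrow> (real^'n) set" where
  "stoich_space B = span {bcol B i - bcol B j | i j. True}"

definition pos_trajectory :: "(real^'n \<Rightarrow> real^'n) \<Rightarrow> (real \<Rightarrow> real^'n) \<Rightarrow> bool" where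
  "pos_trajectory f x \<longleftrightarrow>
     (\<forall>t\<ge>0. x t \<in> pos_orthant \<and> (x has_vector_derivative f (x t)) (at t within {0..}))"

definition detectable_pos :: "(real^'n \<Rightarrow> real^'n) \<Rightarrow> (real^'n \<Rightarrow> real^'p) \<Rightarrow> bool" where
  "detectable_pos f h \<longleftrightarrow>
     (\<forall>x z. pos_trajectory f x \<and> pos_trajectory f z \<and> (\<forall>t\<ge>0. h (x t) = h (z t))
        \<longrightarrow> ((\<lambda>t. norm (x t - z t)) \<longlongrightarrow> 0) at_top)"

definition rho :: "real^'n \<Rightarrow> real^'n" where
  "rho x = (\<chi> k. ln (x $ k))"

definition ker_mat :: "real^'n^'p \<Rightarrow> (real^'n) set" where
  "ker_mat C = {v. C *v v = 0}"

end

theory Submission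
  imports Defs
begin

text \<open>Irreducibility of A gives positive weights on the complexes that balance inflow and
  outflow at every complex, and full column rank of B realises them as the monomials e^{b_j} of a
  positive point e, so that e is a complex balanced equilibrium. The relative entropy
  V(x) = \<Sum> x_k ln (x_k / e_k) - x_k + e_k then decreases along trajectories at least at the
  rate U(x) = \<Sum> a_ij e^{b_j} (sqrt (x^{b_i}/e^{b_i}) - sqrt (x^{b_j}/e^{b_j}))^2. Bounded
  trajectories stay in x(0) + D, so they have limit points with U = 0; these are equilibria, hence
  positive by the absence of boundary equilibria, hence complex balanced, and the relative entropy
  with respect to such a limit point forces convergence of the whole trajectory. The positive
  equilibria are exactly the x with \<rho>(x) - \<rho>(e) orthogonal to D, and on the positive
  orthant h(x) = h(z) iff \<rho>(x) - \<rho>(z) \<in> ker C. Detectability therefore amounts to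
  D^\<bottom> \<inter> ker C = {0}, which is (d) after taking orthogonal complements.\<close>

lemma pos_orthant_nth: "x \<in> pos_orthant \<Longrightarrow> x $ k > 0"
  by (simp add: pos_orthant_def)

lemma trajectory_pos: "pos_trajectory f x \<Longrightarrow> t \<ge> 0 \<Longrightarrow> x t \<in> pos_orthant"
  by (simp add: pos_trajectory_def)

lemma rho_inject:
  assumes "x \<in> pos_orthant" "z \<in> pos_orthant" "rho x = rho z"
  shows "x = z"
  using assms by (simp add: rho_def vec_eq_iff pos_orthant_def)

lemma monom_pos: "x \<in> pos_orthant \<Longrightarrow> monom B j x > 0"
  unfolding monom_def pos_orthant_def by (auto intro!: prod_pos)

lemma tendsto_monom: "(y \<longlongrightarrow> l) F \<Longrightarrow> ((\<lambda>t. monom B j (y t)) \<longlongrightarrow> monom B j l) F"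
  unfolding monom_def by (intro tendsto_intros)

lemma bcol_nth: "bcol B j $ k = real (B $ k $ j)"
  by (simp add: bcol_def column_def realB_def)

lemma ln_monom:
  assumes "x \<in> pos_orthant"
  shows "ln (monom B j x) = bcol B j \<bullet> rho x"
proof -
  have pos: "x $ k > 0" and nz: "x $ k \<noteq> 0" for k
    using pos_orthant_nth[OF assms, of k] by auto
  have "ln (\<Prod>k\<in>UNIV. x$k ^ B$k$j) = (\<Sum>k\<in>UNIV. ln (x$k ^ B$k$j))"
    by (intro ln_prod) (simp_all add: nz)
  then show ?thesis
    by (simp add: monom_def ln_realpow pos inner_vec_def bcol_nth rho_def)
qed

lemma mak_field_in_stoich_space: "mak_field A B x \<in> stoich_space B"
  unfolding mak_field_def stoich_space_def
  by (intro span_sum span_mul span_base) blast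

lemma orthogonal_comp_stoich_space_iff:
  "u \<in> orthogonal_comp (stoich_space B) \<longleftrightarrow> (\<forall>i j. bcol B i \<bullet> u = bcol B j \<bullet> u)"
proof
  assume "u \<in> orthogonal_comp (stoich_space B)"
  then have "orthogonal (bcol B i - bcol B j) u" for i j
    unfolding orthogonal_comp_def stoich_space_def by (auto intro: span_base)
  then show "\<forall>i j. bcol B i \<bullet> u = bcol B j \<bullet> u"
    by (auto simp: orthogonal_def inner_diff_left)
next
  assume "\<forall>i j. bcol B i \<bullet> u = bcol B j \<bullet> u"
  then have "{bcol B i - bcol B j | i j. True} \<subseteq> orthogonal_comp {u}"
    by (auto simp: orthogonal_comp_def orthogonal_def inner_diff_right inner_commute)
  then have "stoich_space B \<subseteq> orthogonal_comp {u}"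
    unfolding stoich_space_def by (intro span_minimal subspace_orthogonal_comp)
  then show "u \<in> orthogonal_comp (stoich_space B)"
    by (auto simp: orthogonal_comp_def orthogonal_commute)
qed

lemma log_diff_perp_iff_proportional_monoms:
  assumes x: "x \<in> pos_orthant" and z: "z \<in> pos_orthant"
  shows "rho x - rho z \<in> orthogonal_comp (stoich_space B)
           \<longleftrightarrow> (\<exists>c>0. \<forall>j. monom B j x = c * monom B j z)"
proof -
  have ln_ratio: "ln (monom B j x) - ln (monom B j z) = bcol B j \<bullet> (rho x - rho z)" for j
    by (simp add: ln_monom x z inner_diff_right)
  show ?thesis
  proof
    assume "rho x - rho z \<in> orthogonal_comp (stoich_space B)"
    then have const: "bcol B j \<bullet> (rho x - rho z) = bcol B i \<bullet> (rho x - rho z)" for i j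
      by (simp add: orthogonal_comp_stoich_space_iff)
    define c where "c = exp (bcol B undefined \<bullet> (rho x - rho z))"
    have "monom B j x = c * monom B j z" for j
    proof -
      have "monom B j x = exp (ln (monom B j x))"
        using monom_pos[OF x, of B j] by simp
      also have "\<dots> = c * exp (ln (monom B j z))"
        using ln_ratio[of j] const[of j undefined] by (simp add: c_def exp_add[symmetric])
      finally show ?thesis
        using monom_pos[OF z, of B j] by simp
    qed
    moreover have "c > 0" by (simp add: c_def)
    ultimately show "\<exists>c>0. \<forall>j. monom B j x = c * monom B j z"
      by blast
  next
    assume "\<exists>c>0. \<forall>j. monom B j x = c * monom B j z"
    then obtain c where "c > 0" "\<And>j. monom B j x = c * monom B j z" by blast
    then have "bcol B j \<bullet> (rho x - rho z) = ln c" for j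
      using ln_ratio[of j] monom_pos[OF z, of B j] by (simp add: ln_mult)
    then show "rho x - rho z \<in> orthogonal_comp (stoich_space B)"
      by (simp add: orthogonal_comp_stoich_space_iff)
  qed
qed

text \<open>Read A as the rate matrix of a graph on the complexes, with an edge from j to i of weight
  a_ij: the weights \<kappa> are balanced when at every complex k the inflow equals the outflow.\<close>
definition balanced_weights :: "real^'m^'m \<Rightarrow> ('m \<Rightarrow> real) \<Rightarrow> bool" where
  "balanced_weights A \<kappa> \<longleftrightarrow> (\<forall>k. (\<Sum>j\<in>UNIV. A$k$j * \<kappa> j) = \<kappa> k * (\<Sum>i\<in>UNIV. A$i$k))"

definition complex_balanced :: "real^'m^'m \<Rightarrow> nat^'m^'n \<Rightarrow> real^'n \<Rightarrow> bool" where
  "complex_balanced A B e \<longleftrightarrow> e \<in> pos_orthant \<and> balanced_weights A (\<lambda>j. monom B j e)"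

lemma balanced_weights_scale:
  "balanced_weights A \<kappa> \<Longrightarrow> balanced_weights A (\<lambda>j. c * \<kappa> j)"
  by (simp add: balanced_weights_def sum_distrib_left[symmetric] mult_ac)

lemma balanced_flux_sum_eq_0:
  fixes A :: "real^'m^'m" and v :: "'m \<Rightarrow> 'a::real_vector"
  assumes "balanced_weights A \<kappa>"
  shows "(\<Sum>i\<in>UNIV. \<Sum>j\<in>UNIV. (A$i$j * \<kappa> j) *\<^sub>R (v i - v j)) = 0"
proof -
  have "(\<Sum>i\<in>UNIV. \<Sum>j\<in>UNIV. (A$i$j * \<kappa> j) *\<^sub>R (v i - v j))
      = (\<Sum>i\<in>UNIV. \<Sum>j\<in>UNIV. (A$i$j * \<kappa> j) *\<^sub>R v i) - (\<Sum>i\<in>UNIV. \<Sum>j\<in>UNIV. (A$i$j * \<kappa> j) *\<^sub>R v j)"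
    by (simp add: scaleR_diff_right sum_subtractf)
  also have "(\<Sum>i\<in>UNIV. \<Sum>j\<in>UNIV. (A$i$j * \<kappa> j) *\<^sub>R v i) = (\<Sum>i\<in>UNIV. (\<kappa> i * (\<Sum>j\<in>UNIV. A$j$i)) *\<^sub>R v i)"
    using assms by (simp add: balanced_weights_def scaleR_sum_left[symmetric])
  also have "(\<Sum>i\<in>UNIV. \<Sum>j\<in>UNIV. (A$i$j * \<kappa> j) *\<^sub>R v j) = (\<Sum>j\<in>UNIV. \<Sum>i\<in>UNIV. (A$i$j * \<kappa> j) *\<^sub>R v j)"
    by (rule sum.swap)
  also have "\<dots> = (\<Sum>j\<in>UNIV. (\<kappa> j * (\<Sum>i\<in>UNIV. A$i$j)) *\<^sub>R v j)"
    by (simp add: scaleR_sum_left[symmetric] sum_distrib_left[symmetric] mult.commute)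
  finally show ?thesis by simp
qed

lemma sum_inflow_eq_sum_outflow:
  fixes A :: "real^'m^'m"
  shows "(\<Sum>k\<in>UNIV. \<Sum>j\<in>UNIV. A$k$j * \<kappa> j) = (\<Sum>k\<in>UNIV. \<kappa> k * (\<Sum>i\<in>UNIV. A$i$k))"
  by (subst sum.swap) (simp add: sum_distrib_left mult.commute)

lemma balanced_weights_nontrivial:
  fixes A :: "real^'m^'m"
  shows "\<exists>v::real^'m. v \<noteq> 0 \<and> balanced_weights A (\<lambda>j. v$j)"
proof -
  define L where "L v = (\<chi> k. (\<Sum>j\<in>UNIV. A$k$j * v$j) - v$k * (\<Sum>i\<in>UNIV. A$i$k))" for v :: "real^'m"
  have lin: "linear L"
    by (rule linearI) (auto simp: L_def vec_eq_iff algebra_simps sum.distrib sum_distrib_left)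
  have "(\<Sum>k\<in>UNIV. L v $ k) = 0" for v
    using sum_inflow_eq_sum_outflow[of A "\<lambda>j. v$j"] by (simp add: L_def sum_subtractf)
  moreover have "(\<Sum>k\<in>UNIV. (\<chi> k. (1::real)) $ k) \<noteq> 0"
    by simp
  ultimately have "(\<chi> k. 1) \<notin> range L"
    by (metis rangeE)
  then have "\<not> inj L"
    using eucl.linear_inj_imp_surj[OF lin] by auto
  then obtain a b where "a \<noteq> b" "L a = L b"
    by (auto simp: inj_def)
  then have "a - b \<noteq> 0" "L (a - b) = 0"
    by (simp_all add: linear_diff[OF lin])
  then show ?thesis
    by (intro exI[of _ "a - b"]) (simp add: L_def balanced_weights_def vec_eq_iff)
qed

text \<open>Balance of |\<kappa>| follows since the triangle inequality is then tight at every complex: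
  the inequalities inflow \<ge> outflow sum to an equality.\<close>
lemma balanced_weights_abs:
  fixes A :: "real^'m^'m"
  assumes A_nonneg: "\<forall>i j. A$i$j \<ge> 0" and bal: "balanced_weights A \<kappa>"
  shows "balanced_weights A (\<lambda>j. \<bar>\<kappa> j\<bar>)"
proof -
  define g where "g k = (\<Sum>j\<in>UNIV. A$k$j * \<bar>\<kappa> j\<bar>) - \<bar>\<kappa> k\<bar> * (\<Sum>i\<in>UNIV. A$i$k)" for k
  have g_nonneg: "g k \<ge> 0" for k
  proof -
    have "\<bar>\<kappa> k\<bar> * (\<Sum>i\<in>UNIV. A$i$k) = \<bar>\<Sum>j\<in>UNIV. A$k$j * \<kappa> j\<bar>"
      using bal A_nonneg by (simp add: balanced_weights_def abs_mult sum_nonneg)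
    also have "\<dots> \<le> (\<Sum>j\<in>UNIV. A$k$j * \<bar>\<kappa> j\<bar>)"
      using sum_abs[of "\<lambda>j. A$k$j * \<kappa> j" UNIV] A_nonneg by (simp add: abs_mult)
    finally show ?thesis by (simp add: g_def)
  qed
  have "(\<Sum>k\<in>UNIV. g k) = 0"
    using sum_inflow_eq_sum_outflow[of A "\<lambda>j. \<bar>\<kappa> j\<bar>"] by (simp add: g_def sum_subtractf)
  then have "g k = 0" for k
    using g_nonneg by (subst (asm) sum_nonneg_eq_0_iff) auto
  then show ?thesis
    by (simp add: balanced_weights_def g_def)
qed

lemma balanced_weights_pos:
  fixes A :: "real^'m^'m"
  assumes A_nonneg: "\<forall>i j. A$i$j \<ge> 0" and irr: "irreducible_matrix A"
    and bal: "balanced_weights A \<kappa>" and nonneg: "\<forall>j. \<kappa> j \<ge> 0" and nz: "\<kappa> j0 \<noteq> 0"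
  shows "\<kappa> k > 0"
proof (rule ccontr)
  assume "\<not> \<kappa> k > 0"
  then have "\<kappa> k = 0" using nonneg by (simp add: not_less eq_iff)
  have zero_step: "\<kappa> j = 0" if "\<kappa> i = 0" "A$i$j \<noteq> 0" for i j
  proof -
    have "(\<Sum>j\<in>UNIV. A$i$j * \<kappa> j) = 0"
      using bal that(1) by (simp add: balanced_weights_def)
    then have "A$i$j * \<kappa> j = 0"
      using A_nonneg nonneg by (subst (asm) sum_nonneg_eq_0_iff) auto
    then show ?thesis using that(2) by simp
  qed
  have "(k, j0) \<in> {(i, j). A $ i $ j \<noteq> 0}\<^sup>*"
    using irr by (simp add: irreducible_matrix_def)
  then have "\<kappa> j0 = 0"
    by (induction rule: rtrancl_induct) (auto intro: \<open>\<kappa> k = 0\<close> zero_step)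
  then show False using nz by simp
qed

lemma irreducible_balanced_weights_exist:
  fixes A :: "real^'m^'m"
  assumes A_nonneg: "\<forall>i j. A$i$j \<ge> 0" and irr: "irreducible_matrix A"
  shows "\<exists>\<kappa>. (\<forall>j. \<kappa> j > 0) \<and> balanced_weights A \<kappa>"
proof -
  obtain v :: "real^'m" where "v \<noteq> 0" and bal: "balanced_weights A (\<lambda>j. v$j)"
    using balanced_weights_nontrivial by blast
  then obtain j0 where j0: "\<bar>v$j0\<bar> \<noteq> 0" by (auto simp: vec_eq_iff)
  have abs_bal: "balanced_weights A (\<lambda>j. \<bar>v$j\<bar>)"
    by (rule balanced_weights_abs[OF A_nonneg bal])
  have "\<bar>v$j\<bar> > 0" for j
    by (rule balanced_weights_pos[OF A_nonneg irr abs_bal _ j0]) simp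
  with abs_bal show ?thesis
    by (intro exI[of _ "\<lambda>j. \<bar>v$j\<bar>"]) simp
qed

text \<open>Full column rank of B makes x \<mapsto> (b_j \<bullet> \<rho>(x))_j onto, so any positive weights are
  realised as the monomials of some e.\<close>
lemma complex_balanced_exists:
  fixes A :: "real^'m^'m" and B :: "nat^'m^'n"
  assumes A_nonneg: "\<forall>i j. A$i$j \<ge> 0" and irr: "irreducible_matrix A"
    and rankB: "rank (realB B) = CARD('m)"
  shows "\<exists>e. complex_balanced A B e"
proof -
  obtain \<kappa> where \<kappa>_pos: "\<forall>j. \<kappa> j > 0" and bal: "balanced_weights A \<kappa>"
    using irreducible_balanced_weights_exist[OF A_nonneg irr] by blast
  define T where "T = transpose (realB B)"
  have "rank T = CARD('m)"
    using rankB by (simp add: T_def rank_transpose)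
  then have "dim (range (\<lambda>y. T *v y)) = DIM(real^'m)"
    by (simp add: rank_dim_range[symmetric])
  then have "span (range (\<lambda>y. T *v y)) = UNIV"
    by (simp only: eucl.dim_eq_full)
  then have "range (\<lambda>y. T *v y) = UNIV"
    by (metis span_eq_iff linear_subspace_image[OF matrix_vector_mul_linear subspace_UNIV])
  then obtain y where y: "T *v y = (\<chi> j. ln (\<kappa> j))"
    by (metis surjD)
  define e where "e = (\<chi> k. exp (y $ k))"
  have e_pos: "e \<in> pos_orthant" by (simp add: e_def pos_orthant_def)
  have "bcol B j \<bullet> rho e = (T *v y) $ j" for j
    by (simp add: e_def rho_def T_def matrix_vector_mult_def transpose_def inner_vec_def
        bcol_nth realB_def)
  then have ln_eq: "ln (monom B j e) = ln (\<kappa> j)" for j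
    by (simp add: ln_monom[OF e_pos] y)
  have "monom B j e = \<kappa> j" for j
    using ln_eq[of j] ln_inj_iff[OF monom_pos[OF e_pos, of B j] \<kappa>_pos[rule_format, of j]] by simp
  then have "complex_balanced A B e"
    using e_pos bal by (simp add: complex_balanced_def)
  then show ?thesis ..
qed

lemma proportional_monoms_imp_equilibrium:
  assumes "complex_balanced A B e" and "\<forall>j. monom B j x = c * monom B j e"
  shows "mak_field A B x = 0"
  using balanced_flux_sum_eq_0[OF balanced_weights_scale[of A "\<lambda>j. monom B j e" c]] assms
  by (simp add: mak_field_def complex_balanced_def)

lemma complex_balanced_proportional:
  assumes "complex_balanced A B e" and "x \<in> pos_orthant" and "\<forall>j. monom B j x = c * monom B j e"
  shows "complex_balanced A B x"
  using balanced_weights_scale[of A "\<lambda>j. monom B j e" c] assms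
  by (simp add: complex_balanced_def)

definition rel_entropy :: "real^'n \<Rightarrow> real^'n \<Rightarrow> real" where
  "rel_entropy e x = (\<Sum>k\<in>UNIV. x$k * ln (x$k) - x$k * ln (e$k) - x$k + e$k)"

definition dissipation :: "real^'m^'m \<Rightarrow> nat^'m^'n \<Rightarrow> real^'n \<Rightarrow> real^'n \<Rightarrow> real" where
  "dissipation A B e x = (\<Sum>i\<in>UNIV. \<Sum>j\<in>UNIV. A$i$j * monom B j e *
       (sqrt (monom B i x / monom B i e) - sqrt (monom B j x / monom B j e))\<^sup>2)"

text \<open>ln t \<le> t - 1 at t = sqrt (p / q).\<close>
lemma mult_ln_diff_le_sqrt:
  fixes p q :: real
  assumes "p > 0" "q > 0"
  shows "q * (ln p - ln q) \<le> 2 * sqrt p * sqrt q - 2 * q"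
proof -
  have "ln p - ln q = 2 * ln (sqrt p / sqrt q)"
    using assms by (simp add: ln_div ln_sqrt)
  also have "\<dots> \<le> 2 * (sqrt p / sqrt q - 1)"
    using assms by (intro mult_left_mono ln_le_minus_one) auto
  finally have "q * (ln p - ln q) \<le> q * (2 * (sqrt p / sqrt q - 1))"
    using assms by (intro mult_left_mono) auto
  also have "\<dots> = 2 * sqrt p * sqrt q - 2 * q"
    using assms by (simp add: field_simps)
  finally show ?thesis .
qed

lemma sum_sqrt_diff_le_rel_entropy:
  assumes "e \<in> pos_orthant" "x \<in> pos_orthant"
  shows "(\<Sum>k\<in>UNIV. (sqrt (x$k) - sqrt (e$k))\<^sup>2) \<le> rel_entropy e x"
  unfolding rel_entropy_def
proof (rule sum_mono)
  fix k
  have pos: "e$k > 0" "x$k > 0"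
    using assms by (simp_all add: pos_orthant_nth)
  have "x$k * (ln (e$k) - ln (x$k)) \<le> 2 * sqrt (e$k) * sqrt (x$k) - 2 * x$k"
    using mult_ln_diff_le_sqrt[OF pos] .
  moreover have "(sqrt (x$k) - sqrt (e$k))\<^sup>2 = x$k - 2 * sqrt (e$k) * sqrt (x$k) + e$k"
    using pos by (simp add: power2_eq_square algebra_simps)
  ultimately show "(sqrt (x$k) - sqrt (e$k))\<^sup>2 \<le> x$k * ln (x$k) - x$k * ln (e$k) - x$k + e$k"
    by (simp add: algebra_simps)
qed

lemma sqrt_diff_le_rel_entropy:
  assumes "e \<in> pos_orthant" "x \<in> pos_orthant"
  shows "(sqrt (x$k) - sqrt (e$k))\<^sup>2 \<le> rel_entropy e x"
  using member_le_sum[of k UNIV "\<lambda>k. (sqrt (x$k) - sqrt (e$k))\<^sup>2"]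
    sum_sqrt_diff_le_rel_entropy[OF assms] by simp

lemma rel_entropy_nonneg: "e \<in> pos_orthant \<Longrightarrow> x \<in> pos_orthant \<Longrightarrow> rel_entropy e x \<ge> 0"
  by (rule order_trans[OF _ sum_sqrt_diff_le_rel_entropy]) (auto intro: sum_nonneg)

lemma nth_le_rel_entropy:
  assumes "e \<in> pos_orthant" "x \<in> pos_orthant"
  shows "x$k \<le> (sqrt (e$k) + sqrt (rel_entropy e x))\<^sup>2"
proof -
  have "sqrt ((sqrt (x$k) - sqrt (e$k))\<^sup>2) \<le> sqrt (rel_entropy e x)"
    by (rule real_sqrt_le_mono[OF sqrt_diff_le_rel_entropy[OF assms]])
  then have "sqrt (x$k) \<le> sqrt (e$k) + sqrt (rel_entropy e x)"
    by simp
  then have "(sqrt (x$k))\<^sup>2 \<le> (sqrt (e$k) + sqrt (rel_entropy e x))\<^sup>2"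
    using pos_orthant_nth[OF assms(2), of k] by (intro power_mono) simp_all
  then show ?thesis
    using pos_orthant_nth[OF assms(2), of k] by simp
qed

lemma dissipation_nonneg:
  "\<forall>i j. A$i$j \<ge> 0 \<Longrightarrow> e \<in> pos_orthant \<Longrightarrow> dissipation A B e x \<ge> 0"
  unfolding dissipation_def
  by (intro sum_nonneg mult_nonneg_nonneg) (auto intro: less_imp_le monom_pos)

lemma tendsto_dissipation:
  assumes "e \<in> pos_orthant" "(y \<longlongrightarrow> l) F"
  shows "((\<lambda>t. dissipation A B e (y t)) \<longlongrightarrow> dissipation A B e l) F"
proof -
  have "monom B j e \<noteq> 0" for j
    using monom_pos[OF assms(1), of B j] by simp
  then show ?thesis
    unfolding dissipation_def by (intro tendsto_intros tendsto_monom assms(2)) auto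
qed

text \<open>With P_j = x^{b_j} / e^{b_j}, the flux terms a_ij e^{b_j} (P_i - P_j) cancel by complex
  balance, and what remains is estimated by mult_ln_diff_le_sqrt.\<close>
lemma rel_entropy_dissipation_ineq:
  assumes A_nonneg: "\<forall>i j. A$i$j \<ge> 0" and cb: "complex_balanced A B e" and x: "x \<in> pos_orthant"
  shows "(rho x - rho e) \<bullet> mak_field A B x \<le> - dissipation A B e x"
proof -
  have e: "e \<in> pos_orthant" using cb by (simp add: complex_balanced_def)
  define \<kappa> where "\<kappa> j = monom B j e" for j
  define P where "P j = monom B j x / monom B j e" for j
  have \<kappa>_pos: "\<kappa> j > 0" for j
    using monom_pos[OF e] by (simp add: \<kappa>_def)
  have P_pos: "P j > 0" for j
    using monom_pos[OF e, of B j] monom_pos[OF x, of B j] by (simp add: P_def)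
  have monom_x: "monom B j x = \<kappa> j * P j" for j
    using \<kappa>_pos[of j] by (simp add: P_def \<kappa>_def)
  have "ln (P i) = bcol B i \<bullet> (rho x - rho e)" for i
    using monom_pos[OF x, of B i] monom_pos[OF e, of B i]
    by (simp add: P_def ln_div ln_monom x e inner_diff_right)
  then have ln_P: "(rho x - rho e) \<bullet> (bcol B i - bcol B j) = ln (P i) - ln (P j)" for i j
    by (simp add: inner_diff_left inner_diff_right inner_commute)
  have "(rho x - rho e) \<bullet> mak_field A B x
     = (\<Sum>i\<in>UNIV. \<Sum>j\<in>UNIV. A$i$j * \<kappa> j * (P j * (ln (P i) - ln (P j))))"
    unfolding mak_field_def by (simp add: inner_sum_right ln_P monom_x mult_ac)
  also have "\<dots> \<le> (\<Sum>i\<in>UNIV. \<Sum>j\<in>UNIV. A$i$j * \<kappa> j * ((P i - P j) - (sqrt (P i) - sqrt (P j))\<^sup>2))"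
  proof (intro sum_mono mult_left_mono)
    fix i j
    have "P j * (ln (P i) - ln (P j)) \<le> 2 * sqrt (P i) * sqrt (P j) - 2 * P j"
      by (rule mult_ln_diff_le_sqrt[OF P_pos P_pos])
    moreover have "(sqrt (P i) - sqrt (P j))\<^sup>2 = P i - 2 * sqrt (P i) * sqrt (P j) + P j"
      using P_pos[of i] P_pos[of j] by (simp add: power2_eq_square algebra_simps)
    ultimately show "P j * (ln (P i) - ln (P j)) \<le> (P i - P j) - (sqrt (P i) - sqrt (P j))\<^sup>2"
      by simp
    show "0 \<le> A$i$j * \<kappa> j"
      using A_nonneg \<kappa>_pos by (simp add: less_imp_le)
  qed
  also have "\<dots> = (\<Sum>i\<in>UNIV. \<Sum>j\<in>UNIV. (A$i$j * \<kappa> j) *\<^sub>R (P i - P j)) - dissipation A B e x"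
    unfolding dissipation_def by (simp add: P_def \<kappa>_def right_diff_distrib sum_subtractf)
  also have "(\<Sum>i\<in>UNIV. \<Sum>j\<in>UNIV. (A$i$j * \<kappa> j) *\<^sub>R (P i - P j)) = 0"
    using cb by (intro balanced_flux_sum_eq_0) (simp add: complex_balanced_def \<kappa>_def)
  finally show ?thesis by simp
qed

lemma dissipation_eq_0_imp_proportional_monoms:
  assumes A_nonneg: "\<forall>i j. A$i$j \<ge> 0" and irr: "irreducible_matrix A"
    and e: "e \<in> pos_orthant" and diss: "dissipation A B e l = 0"
  shows "\<exists>c. \<forall>j. monom B j l = c * monom B j e"
proof -
  define R where "R i = monom B i l / monom B i e" for i
  have e_pos: "monom B i e > 0" for i
    using monom_pos[OF e] .
  have term_nonneg: "0 \<le> A$i$j * monom B j e * (sqrt (R i) - sqrt (R j))\<^sup>2" for i j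
    using A_nonneg e_pos[of j] by (simp add: less_imp_le)
  have "(\<Sum>i\<in>UNIV. \<Sum>j\<in>UNIV. A$i$j * monom B j e * (sqrt (R i) - sqrt (R j))\<^sup>2) = 0"
    using diss by (simp add: dissipation_def R_def)
  then have "A$i$j * monom B j e * (sqrt (R i) - sqrt (R j))\<^sup>2 = 0" for i j
    using term_nonneg by (simp add: sum_nonneg sum_nonneg_eq_0_iff)
  then have edge: "R i = R j" if "A$i$j \<noteq> 0" for i j
    using that e_pos[of j] by (metis less_irrefl mult_eq_0_iff power_eq_0_iff
        real_sqrt_eq_iff right_minus_eq)
  have R_const: "R i = R j" for i j
  proof -
    have "(i, j) \<in> {(i, j). A $ i $ j \<noteq> 0}\<^sup>*"
      using irr by (simp add: irreducible_matrix_def)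
    then show ?thesis
      by (induction rule: rtrancl_induct) (auto dest: edge)
  qed
  have "monom B j l = R j * monom B j e" for j
    using e_pos[of j] by (simp add: R_def)
  then have "monom B j l = R undefined * monom B j e" for j
    by (metis R_const)
  then show ?thesis by blast
qed

lemma trajectory_stays_in_stoich_class:
  assumes tr: "pos_trajectory (mak_field A B) x" and t: "t \<ge> 0"
  shows "x t - x 0 \<in> stoich_space B"
proof -
  have "w \<bullet> (x t - x 0) = 0" if w: "w \<in> orthogonal_comp (stoich_space B)" for w
  proof -
    have "((\<lambda>s. w \<bullet> x s) has_real_derivative 0) (at s within {0..})" if "s \<in> {0..}" for s
    proof -
      have "(x has_vector_derivative mak_field A B (x s)) (at s within {0..})"
        using tr that by (simp add: pos_trajectory_def)
      then have "((\<lambda>s. w \<bullet> x s) has_vector_derivative w \<bullet> mak_field A B (x s)) (at s within {0..})"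
        by (rule bounded_linear.has_vector_derivative[OF bounded_linear_inner_right])
      moreover have "w \<bullet> mak_field A B (x s) = 0"
        using w mak_field_in_stoich_space[of A B "x s"]
        by (auto simp: orthogonal_comp_def orthogonal_def inner_commute)
      ultimately show ?thesis
        by (simp add: has_real_derivative_iff_has_vector_derivative)
    qed
    then obtain c where "\<forall>s\<in>{0..}. w \<bullet> x s = c"
      using has_field_derivative_zero_constant[of "{0..}" "\<lambda>s. w \<bullet> x s"] by auto
    then show ?thesis
      using t by (simp add: inner_diff_right)
  qed
  then have "x t - x 0 \<in> orthogonal_comp (orthogonal_comp (stoich_space B))"
    by (auto simp: orthogonal_comp_def orthogonal_def)
  then show ?thesis
    by (simp add: orthogonal_comp_self stoich_space_def)
qed

lemma rel_entropy_has_derivative: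
  assumes xt: "x t \<in> pos_orthant" and d: "(x has_vector_derivative v) (at t within S)"
  shows "((\<lambda>s. rel_entropy e (x s)) has_real_derivative (rho (x t) - rho e) \<bullet> v) (at t within S)"
proof -
  have dk: "((\<lambda>s. x s $ k) has_real_derivative v $ k) (at t within S)" for k
    using bounded_linear.has_vector_derivative[OF bounded_linear_vec_nth d]
    by (simp add: has_real_derivative_iff_has_vector_derivative)
  have "((\<lambda>s. x s $ k * ln (x s $ k) - x s $ k * ln (e$k) - x s $ k + e$k) has_real_derivative
          (ln (x t $ k) - ln (e $ k)) * v $ k) (at t within S)" for k
    using pos_orthant_nth[OF xt, of k]
    by (auto intro!: derivative_eq_intros dk simp: field_simps)
  then have "((\<lambda>s. rel_entropy e (x s)) has_real_derivative
               (\<Sum>k\<in>UNIV. (ln (x t $ k) - ln (e $ k)) * v $ k)) (at t within S)"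
    unfolding rel_entropy_def by (intro DERIV_sum) auto
  then show ?thesis
    by (simp add: inner_vec_def rho_def)
qed

lemma rel_entropy_decrease:
  assumes A_nonneg: "\<forall>i j. A$i$j \<ge> 0" and cb: "complex_balanced A B e"
    and tr: "pos_trajectory (mak_field A B) x"
    and ab: "0 \<le> a" "a \<le> b"
    and diss: "\<forall>t\<in>{a..b}. \<delta> \<le> dissipation A B e (x t)"
  shows "rel_entropy e (x b) \<le> rel_entropy e (x a) - (b - a) * \<delta>"
proof -
  define V' where "V' t = (rho (x t) - rho e) \<bullet> mak_field A B (x t)" for t
  have "((\<lambda>s. rel_entropy e (x s)) has_real_derivative V' t) (at t within {a..b})"
    if "t \<in> {a..b}" for t
  proof -
    have t: "t \<ge> 0"
      using that ab by simp
    then have "(x has_vector_derivative mak_field A B (x t)) (at t within {0..})"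
      using tr by (simp add: pos_trajectory_def)
    then have "((\<lambda>s. rel_entropy e (x s)) has_real_derivative V' t) (at t within {0..})"
      unfolding V'_def by (rule rel_entropy_has_derivative[of x t, OF trajectory_pos[OF tr t]])
    then show ?thesis
      by (rule DERIV_subset) (use ab in auto)
  qed
  then obtain \<xi> where \<xi>: "\<xi> \<in> {a..b}"
    and mvt: "rel_entropy e (x b) - rel_entropy e (x a) = V' \<xi> * (b - a)"
    using mvt_very_simple[OF ab(2), of "\<lambda>s. rel_entropy e (x s)" "\<lambda>t h. V' t * h"]
    by (auto simp: has_field_derivative_def)
  have "V' \<xi> \<le> - dissipation A B e (x \<xi>)"
    unfolding V'_def using \<xi> ab
    by (intro rel_entropy_dissipation_ineq[OF A_nonneg cb trajectory_pos[OF tr]]) auto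
  also have "\<dots> \<le> - \<delta>"
    using diss \<xi> by simp
  finally have "(b - a) * V' \<xi> \<le> (b - a) * (- \<delta>)"
    using ab by (intro mult_left_mono) auto
  then show ?thesis
    using mvt by (simp add: mult.commute)
qed

lemma rel_entropy_antimono:
  assumes "\<forall>i j. A$i$j \<ge> 0" "complex_balanced A B e" "pos_trajectory (mak_field A B) x"
    and "0 \<le> a" "a \<le> b"
  shows "rel_entropy e (x b) \<le> rel_entropy e (x a)"
proof -
  have e: "e \<in> pos_orthant"
    using assms(2) by (simp add: complex_balanced_def)
  show ?thesis
    using rel_entropy_decrease[OF assms, of 0] dissipation_nonneg[OF assms(1) e] by simp
qed

lemma trajectory_bounded:
  assumes A_nonneg: "\<forall>i j. A$i$j \<ge> 0" and cb: "complex_balanced A B e"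
    and tr: "pos_trajectory (mak_field A B) x"
  shows "bounded (x ` {0..})"
proof -
  have e: "e \<in> pos_orthant"
    using cb by (simp add: complex_balanced_def)
  define V0 where "V0 = rel_entropy e (x 0)"
  have "norm (x t) \<le> (\<Sum>k\<in>UNIV. (sqrt (e$k) + sqrt V0)\<^sup>2)" if t: "t \<ge> 0" for t
  proof -
    have xt: "x t \<in> pos_orthant"
      using trajectory_pos[OF tr t] .
    have "norm (x t) \<le> (\<Sum>k\<in>UNIV. \<bar>x t $ k\<bar>)"
      by (rule norm_le_l1_cart)
    also have "\<dots> \<le> (\<Sum>k\<in>UNIV. (sqrt (e$k) + sqrt V0)\<^sup>2)"
    proof (rule sum_mono)
      fix k
      have "rel_entropy e (x t) \<le> V0"
        unfolding V0_def by (rule rel_entropy_antimono[OF A_nonneg cb tr order_refl t])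
      then have "(sqrt (e$k) + sqrt (rel_entropy e (x t)))\<^sup>2 \<le> (sqrt (e$k) + sqrt V0)\<^sup>2"
        using rel_entropy_nonneg[OF e xt] pos_orthant_nth[OF e, of k]
        by (intro power_mono add_left_mono real_sqrt_le_mono) auto
      then show "\<bar>x t $ k\<bar> \<le> (sqrt (e$k) + sqrt V0)\<^sup>2"
        using nth_le_rel_entropy[OF e xt, of k] pos_orthant_nth[OF xt, of k] by simp
    qed
    finally show ?thesis .
  qed
  then show ?thesis
    by (auto simp: bounded_iff)
qed

lemma dissipation_frequently_small:
  assumes A_nonneg: "\<forall>i j. A$i$j \<ge> 0" and cb: "complex_balanced A B e"
    and tr: "pos_trajectory (mak_field A B) x" and "\<delta> > 0" "T \<ge> 0"
  shows "\<exists>t\<ge>T. dissipation A B e (x t) < \<delta>"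
proof (rule ccontr)
  assume "\<not> ?thesis"
  then have diss: "\<forall>t\<in>{T..b}. \<delta> \<le> dissipation A B e (x t)" for b
    by (auto simp: not_less)
  have e: "e \<in> pos_orthant"
    using cb by (simp add: complex_balanced_def)
  define b where "b = T + rel_entropy e (x T) / \<delta> + 1"
  have "rel_entropy e (x T) \<ge> 0"
    using rel_entropy_nonneg[OF e trajectory_pos[OF tr assms(5)]] .
  then have "T \<le> b"
    using assms(4) by (simp add: b_def)
  then have "rel_entropy e (x b) \<le> rel_entropy e (x T) - (b - T) * \<delta>"
    by (rule rel_entropy_decrease[OF A_nonneg cb tr assms(5) _ diss])
  also have "\<dots> = - \<delta>"
    using assms(4) by (simp add: b_def field_simps)
  finally have "rel_entropy e (x b) < 0"
    using assms(4) by simp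
  moreover have "b \<ge> 0"
    using \<open>T \<le> b\<close> assms(5) by simp
  ultimately show False
    using rel_entropy_nonneg[OF e trajectory_pos[OF tr]] by force
qed

lemma dissipation_free_limit_point:
  assumes A_nonneg: "\<forall>i j. A$i$j \<ge> 0" and cb: "complex_balanced A B e"
    and tr: "pos_trajectory (mak_field A B) x"
  shows "\<exists>s l. (\<forall>n. s n \<ge> 0) \<and> (\<lambda>n. x (s n)) \<longlonglongrightarrow> l \<and> dissipation A B e l = 0"
proof -
  have e: "e \<in> pos_orthant"
    using cb by (simp add: complex_balanced_def)
  have "\<forall>n::nat. \<exists>t\<ge>real n. dissipation A B e (x t) < 1 / (real n + 1)"
    using dissipation_frequently_small[OF A_nonneg cb tr] by simp
  then obtain tt where tt_ge: "\<And>n. tt n \<ge> real n"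
    and tt_diss: "\<And>n. dissipation A B e (x (tt n)) < 1 / (real n + 1)"
    by metis
  have tt_nonneg: "tt n \<ge> 0" for n
    using tt_ge[of n] by linarith
  have "range (x \<circ> tt) \<subseteq> x ` {0..}"
    using tt_nonneg by auto
  then have "bounded (range (x \<circ> tt))"
    by (rule bounded_subset[OF trajectory_bounded[OF A_nonneg cb tr]])
  then obtain l r where r: "strict_mono r" and lim: "((x \<circ> tt) \<circ> r) \<longlonglongrightarrow> l"
    using bounded_imp_convergent_subsequence by blast
  have "(\<lambda>n. dissipation A B e (x (tt (r n)))) \<longlonglongrightarrow> dissipation A B e l"
    using lim by (intro tendsto_dissipation[OF e]) (simp add: comp_def)
  moreover have "(\<lambda>n. 1 / (real n + 1)) \<longlonglongrightarrow> 0"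
    using LIMSEQ_inverse_real_of_nat by (simp add: inverse_eq_divide add.commute)
  then have "(\<lambda>n. 1 / (real (r n) + 1)) \<longlonglongrightarrow> 0"
    using LIMSEQ_subseq_LIMSEQ[OF _ r] by (simp add: comp_def)
  ultimately have "dissipation A B e l \<le> 0"
    using tt_diss by (intro LIMSEQ_le) (auto intro: less_imp_le)
  then have "dissipation A B e l = 0"
    using dissipation_nonneg[OF A_nonneg e, of B l] by simp
  then show ?thesis
    using tt_nonneg lim by (intro exI[of _ "tt \<circ> r"] exI[of _ l]) (simp add: comp_def)
qed

lemma tendsto_of_rel_entropy_tendsto_0:
  assumes l: "l \<in> pos_orthant" and pos: "\<forall>\<^sub>F t in F. x t \<in> pos_orthant"
    and V: "((\<lambda>t. rel_entropy l (x t)) \<longlongrightarrow> 0) F"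
  shows "(x \<longlongrightarrow> l) F"
proof (rule vec_tendstoI)
  fix k
  have "((\<lambda>t. (sqrt (x t $ k) - sqrt (l $ k))\<^sup>2) \<longlongrightarrow> 0) F"
    using pos by (intro tendsto_sandwich[OF _ _ tendsto_const V])
      (auto elim!: eventually_mono intro: sqrt_diff_le_rel_entropy[OF l])
  then have "((\<lambda>t. sqrt (x t $ k) - sqrt (l $ k)) \<longlongrightarrow> 0) F"
    using tendsto_real_sqrt by (fastforce simp: tendsto_rabs_zero_iff)
  then have "((\<lambda>t. (sqrt (x t $ k))\<^sup>2) \<longlongrightarrow> (sqrt (l $ k))\<^sup>2) F"
    by (intro tendsto_power) (simp add: Lim_null[symmetric])
  moreover have "\<forall>\<^sub>F t in F. (sqrt (x t $ k))\<^sup>2 = x t $ k"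
    using pos by eventually_elim (simp add: pos_orthant_nth less_imp_le)
  ultimately show "((\<lambda>t. x t $ k) \<longlongrightarrow> l $ k) F"
    using pos_orthant_nth[OF l, of k] by (simp add: Lim_transform_eventually)
qed

lemma trajectory_tendsto_balanced_limit_point:
  assumes A_nonneg: "\<forall>i j. A$i$j \<ge> 0" and cb: "complex_balanced A B l"
    and tr: "pos_trajectory (mak_field A B) x"
    and s: "\<forall>n. s n \<ge> 0" and lim: "(\<lambda>n. x (s n)) \<longlonglongrightarrow> l"
  shows "(x \<longlongrightarrow> l) at_top"
proof -
  have l: "l \<in> pos_orthant"
    using cb by (simp add: complex_balanced_def)
  have "l $ k \<noteq> 0" for k
    using pos_orthant_nth[OF l, of k] by simp
  then have "(\<lambda>n. rel_entropy l (x (s n))) \<longlonglongrightarrow> rel_entropy l l"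
    unfolding rel_entropy_def by (intro tendsto_intros lim)
  then have V_seq: "(\<lambda>n. rel_entropy l (x (s n))) \<longlonglongrightarrow> 0"
    by (simp add: rel_entropy_def)
  have "((\<lambda>t. rel_entropy l (x t)) \<longlongrightarrow> 0) at_top"
  proof (rule tendstoI)
    fix \<epsilon> :: real assume "\<epsilon> > 0"
    from tendstoD[OF V_seq this] obtain n where "\<forall>m\<ge>n. dist (rel_entropy l (x (s m))) 0 < \<epsilon>"
      by (auto simp: eventually_sequentially)
    then have n: "rel_entropy l (x (s n)) < \<epsilon>"
      by (auto simp: dist_real_def)
    have "dist (rel_entropy l (x t)) 0 < \<epsilon>" if "t \<ge> s n" for t
      using rel_entropy_antimono[OF A_nonneg cb tr s[rule_format] that]
        rel_entropy_nonneg[OF l trajectory_pos[OF tr]] s[rule_format, of n] that n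
      by (simp add: dist_real_def)
    then show "\<forall>\<^sub>F t in at_top. dist (rel_entropy l (x t)) 0 < \<epsilon>"
      by (auto simp: eventually_at_top_linorder)
  qed
  moreover have "\<forall>\<^sub>F t in at_top. x t \<in> pos_orthant"
    using trajectory_pos[OF tr] by (auto simp: eventually_at_top_linorder)
  ultimately show ?thesis
    using tendsto_of_rel_entropy_tendsto_0[OF l] by blast
qed

lemma limit_point_in_nonneg_stoich_class:
  assumes tr: "pos_trajectory (mak_field A B) x"
    and s: "\<forall>n. s n \<ge> 0" and lim: "(\<lambda>n. x (s n)) \<longlonglongrightarrow> l"
  shows "l \<in> nonneg_orthant" "l - x 0 \<in> stoich_space B"
proof -
  have "x (s n) $ k \<ge> 0" for n k
    using pos_orthant_nth[OF trajectory_pos[OF tr s[rule_format]]] by (simp add: less_imp_le)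
  then have "l $ k \<ge> 0" for k
    by (intro LIMSEQ_le_const[OF tendsto_vec_nth[OF lim]]) auto
  then show "l \<in> nonneg_orthant"
    by (simp add: nonneg_orthant_def)
  have "closed (stoich_space B)"
    unfolding stoich_space_def by (rule closed_subspace) simp
  moreover have "x (s n) - x 0 \<in> stoich_space B" for n
    using trajectory_stays_in_stoich_class[OF tr] s by blast
  moreover have "(\<lambda>n. x (s n) - x 0) \<longlonglongrightarrow> l - x 0"
    by (intro tendsto_intros lim)
  ultimately show "l - x 0 \<in> stoich_space B"
    by (rule closed_sequentially)
qed

lemma trajectory_converges_to_equilibrium:
  assumes A_nonneg: "\<forall>i j. A$i$j \<ge> 0" and irr: "irreducible_matrix A"
    and no_bdry_eq: "\<forall>x. x \<in> nonneg_orthant \<and> (\<exists>k. x $ k = 0)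
                        \<and> (\<exists>xb \<in> pos_orthant. x - xb \<in> stoich_space B)
                        \<longrightarrow> mak_field A B x \<noteq> 0"
    and cb: "complex_balanced A B e" and tr: "pos_trajectory (mak_field A B) x"
  shows "\<exists>l\<in>pos_orthant. rho l - rho e \<in> orthogonal_comp (stoich_space B) \<and> (x \<longlongrightarrow> l) at_top"
proof -
  have e: "e \<in> pos_orthant"
    using cb by (simp add: complex_balanced_def)
  obtain s l where s: "\<forall>n. s n \<ge> 0" and lim: "(\<lambda>n. x (s n)) \<longlonglongrightarrow> l"
    and diss: "dissipation A B e l = 0"
    using dissipation_free_limit_point[OF A_nonneg cb tr] by blast
  have l_nonneg: "l \<in> nonneg_orthant" and l_class: "l - x 0 \<in> stoich_space B"
    using limit_point_in_nonneg_stoich_class[OF tr s lim] by blast+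
  obtain c where c: "\<forall>j. monom B j l = c * monom B j e"
    using dissipation_eq_0_imp_proportional_monoms[OF A_nonneg irr e diss] by blast
  have "mak_field A B l = 0"
    by (rule proportional_monoms_imp_equilibrium[OF cb c])
  have l: "l \<in> pos_orthant"
  proof (rule ccontr)
    assume "l \<notin> pos_orthant"
    then obtain k where "\<not> l $ k > 0"
      by (auto simp: pos_orthant_def)
    then have "l $ k = 0"
      using l_nonneg by (simp add: nonneg_orthant_def eq_iff not_less)
    then have "mak_field A B l \<noteq> 0"
      using no_bdry_eq l_nonneg l_class trajectory_pos[OF tr, of 0] by blast
    then show False
      using \<open>mak_field A B l = 0\<close> by simp
  qed
  have "c > 0"
    using c monom_pos[OF l, of B undefined] monom_pos[OF e, of B undefined]
    by (simp add: zero_less_mult_iff)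
  with c have "rho l - rho e \<in> orthogonal_comp (stoich_space B)"
    using log_diff_perp_iff_proportional_monoms[OF l e] by blast
  moreover have "(x \<longlongrightarrow> l) at_top"
    using complex_balanced_proportional[OF cb l c]
    by (rule trajectory_tendsto_balanced_limit_point[OF A_nonneg _ tr s lim])
  ultimately show ?thesis
    using l by blast
qed

lemma out_map_pos_orthant:
  assumes "x \<in> pos_orthant"
  shows "out_map C x $ i = exp ((C *v rho x) $ i)"
proof -
  have "abs_pow (x$k) c = exp (c * ln (x$k))" for k c
    using pos_orthant_nth[OF assms, of k] by (simp add: abs_pow_def powr_def)
  then show ?thesis
    by (simp add: out_map_def matrix_vector_mult_def rho_def exp_sum)
qed

lemma out_map_eq_iff:
  assumes "x \<in> pos_orthant" "z \<in> pos_orthant"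
  shows "out_map C x = out_map C z \<longleftrightarrow> rho x - rho z \<in> ker_mat C"
  by (simp add: vec_eq_iff out_map_pos_orthant[OF assms(1)] out_map_pos_orthant[OF assms(2)]
      ker_mat_def matrix_vector_mult_diff_distrib)

lemma tendsto_out_map:
  assumes lim: "(y \<longlongrightarrow> l) F" and pos: "\<forall>\<^sub>F t in F. y t \<in> pos_orthant" and l: "l \<in> pos_orthant"
  shows "((\<lambda>t. out_map C (y t)) \<longlongrightarrow> out_map C l) F"
proof (rule vec_tendstoI)
  fix i
  have "l $ k \<noteq> 0" for k
    using pos_orthant_nth[OF l, of k] by simp
  then have "((\<lambda>t. exp ((C *v rho (y t)) $ i)) \<longlongrightarrow> exp ((C *v rho l) $ i)) F"
    unfolding matrix_vector_mult_def rho_def by (intro tendsto_intros lim) simp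
  moreover have "\<forall>\<^sub>F t in F. exp ((C *v rho (y t)) $ i) = out_map C (y t) $ i"
    using pos by eventually_elim (simp add: out_map_pos_orthant)
  ultimately show "((\<lambda>t. out_map C (y t) $ i) \<longlongrightarrow> out_map C l $ i) F"
    by (simp add: out_map_pos_orthant[OF l] Lim_transform_eventually)
qed

lemma orthogonal_comp_sum_range_transpose:
  fixes C :: "real^'n^'p"
  assumes D: "subspace D"
  shows "orthogonal_comp {d + w | d w. d \<in> D \<and> w \<in> range (\<lambda>v. transpose C *v v)}
           = orthogonal_comp D \<inter> ker_mat C"
    (is "orthogonal_comp ?S = _")
proof
  show "orthogonal_comp ?S \<subseteq> orthogonal_comp D \<inter> ker_mat C"
  proof
    fix v assume v: "v \<in> orthogonal_comp ?S"
    have "d \<in> ?S" if "d \<in> D" for d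
    proof -
      have "d = d + transpose C *v 0"
        by simp
      moreover have "transpose C *v 0 \<in> range (\<lambda>v. transpose C *v v)"
        by (rule rangeI)
      ultimately show ?thesis
        using that by blast
    qed
    then have "D \<subseteq> ?S"
      by blast
    then have "v \<in> orthogonal_comp D"
      using v orthogonal_comp_anti_mono by blast
    moreover have "transpose C *v (C *v v) \<in> ?S"
      using subspace_0[OF D] by (force intro: exI[of _ 0])
    then have "orthogonal (transpose C *v (C *v v)) v"
      using v unfolding orthogonal_comp_def by blast
    then have "(C *v v) \<bullet> (C *v v) = 0"
      by (simp add: orthogonal_def dot_lmul_matrix)
    then have "v \<in> ker_mat C"
      by (simp add: ker_mat_def)
    ultimately show "v \<in> orthogonal_comp D \<inter> ker_mat C"
      by simp
  qed
next
  show "orthogonal_comp D \<inter> ker_mat C \<subseteq> orthogonal_comp ?S"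
    by (auto simp: orthogonal_comp_def orthogonal_def inner_add_left dot_lmul_matrix ker_mat_def)
qed

lemma orthogonal_comp_inter_ker_eq_0_iff:
  fixes C :: "real^'n^'p"
  assumes D: "subspace D"
  shows "orthogonal_comp D \<inter> ker_mat C = {0}
           \<longleftrightarrow> {d + w | d w. d \<in> D \<and> w \<in> range (\<lambda>v. transpose C *v v)} = UNIV"
    (is "_ \<longleftrightarrow> ?S = UNIV")
proof -
  have S: "subspace ?S"
    using D by (intro subspace_sums linear_subspace_image[OF matrix_vector_mul_linear subspace_UNIV])
  have "orthogonal_comp ?S = {0} \<longleftrightarrow> ?S = UNIV"
  proof
    assume "orthogonal_comp ?S = {0}"
    then have "orthogonal_comp (orthogonal_comp ?S) = UNIV"
      by simp
    then show "?S = UNIV"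
      by (simp only: orthogonal_comp_self[OF S])
  qed simp
  then show ?thesis
    by (simp only: orthogonal_comp_sum_range_transpose[OF D])
qed

lemma detectable_imp_equilibria_separated:
  assumes "detectable_pos (mak_field A B) (out_map C)"
    and "x \<in> pos_orthant" "z \<in> pos_orthant" "rho x - rho z \<in> ker_mat C"
    and "mak_field A B x = 0" "mak_field A B z = 0"
  shows "x = z"
proof -
  have "pos_trajectory (mak_field A B) (\<lambda>t. x)" "pos_trajectory (mak_field A B) (\<lambda>t. z)"
    using assms(2,3,5,6) by (simp_all add: pos_trajectory_def)
  moreover have "out_map C x = out_map C z"
    using out_map_eq_iff[OF assms(2,3)] assms(4) by blast
  ultimately have "((\<lambda>t::real. norm (x - z)) \<longlongrightarrow> 0) at_top"
    using assms(1) unfolding detectable_pos_def by blast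
  then show "x = z"
    by (simp add: tendsto_const_iff)
qed

text \<open>A vector v in the intersection moves the balanced equilibrium e to e exp(v), which is again
  an equilibrium with the same output.\<close>
lemma equilibria_separated_imp_perp_inter_ker_eq_0:
  assumes cb: "complex_balanced A B e"
    and sep: "\<forall>x\<in>pos_orthant. \<forall>z\<in>pos_orthant. rho x - rho z \<in> ker_mat C
                \<and> mak_field A B x = 0 \<and> mak_field A B z = 0 \<longrightarrow> x = z"
  shows "orthogonal_comp (stoich_space B) \<inter> ker_mat C = {0}"
proof (intro equalityI subsetI)
  fix v assume v: "v \<in> orthogonal_comp (stoich_space B) \<inter> ker_mat C"
  have e: "e \<in> pos_orthant"
    using cb by (simp add: complex_balanced_def)
  define z where "z = (\<chi> k. e$k * exp (v$k))"
  have z: "z \<in> pos_orthant"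
    using e by (simp add: z_def pos_orthant_def)
  have "ln (e$k * exp (v$k)) = ln (e$k) + v$k" for k
    using pos_orthant_nth[OF e, of k] by (simp add: ln_mult)
  then have rho_z: "rho z - rho e = v"
    by (simp add: z_def rho_def vec_eq_iff)
  then obtain c where "\<forall>j. monom B j z = c * monom B j e"
    using v log_diff_perp_iff_proportional_monoms[OF z e] by auto
  then have "mak_field A B z = 0"
    by (rule proportional_monoms_imp_equilibrium[OF cb])
  moreover have "mak_field A B e = 0"
    using proportional_monoms_imp_equilibrium[OF cb, of e 1] by simp
  ultimately have "z = e"
    using sep z e v rho_z by auto
  then show "v \<in> {0}"
    using rho_z by simp
qed (simp add: ker_mat_def subspace_0[OF subspace_orthogonal_comp])

lemma perp_inter_ker_eq_0_imp_detectable: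
  assumes A_nonneg: "\<forall>i j. A$i$j \<ge> 0" and irr: "irreducible_matrix A"
    and no_bdry_eq: "\<forall>x. x \<in> nonneg_orthant \<and> (\<exists>k. x $ k = 0)
                        \<and> (\<exists>xb \<in> pos_orthant. x - xb \<in> stoich_space B)
                        \<longrightarrow> mak_field A B x \<noteq> 0"
    and cb: "complex_balanced A B e"
    and perp: "orthogonal_comp (stoich_space B) \<inter> ker_mat C = {0}"
  shows "detectable_pos (mak_field A B) (out_map C)"
  unfolding detectable_pos_def
proof (intro allI impI, elim conjE)
  fix x z
  assume tr_x: "pos_trajectory (mak_field A B) x" and tr_z: "pos_trajectory (mak_field A B) z"
    and out: "\<forall>t\<ge>0. out_map C (x t) = out_map C (z t)"
  obtain xl where xl: "xl \<in> pos_orthant" "rho xl - rho e \<in> orthogonal_comp (stoich_space B)"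
    and lim_x: "(x \<longlongrightarrow> xl) at_top"
    using trajectory_converges_to_equilibrium[OF A_nonneg irr no_bdry_eq cb tr_x] by blast
  obtain zl where zl: "zl \<in> pos_orthant" "rho zl - rho e \<in> orthogonal_comp (stoich_space B)"
    and lim_z: "(z \<longlongrightarrow> zl) at_top"
    using trajectory_converges_to_equilibrium[OF A_nonneg irr no_bdry_eq cb tr_z] by blast
  have ev_pos: "\<forall>\<^sub>F t in at_top. y t \<in> pos_orthant" if "pos_trajectory (mak_field A B) y" for y
    using trajectory_pos[OF that] by (auto simp: eventually_at_top_linorder)
  have "((\<lambda>t. out_map C (x t)) \<longlongrightarrow> out_map C zl) at_top"
  proof (rule Lim_transform_eventually)
    show "((\<lambda>t. out_map C (z t)) \<longlongrightarrow> out_map C zl) at_top"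
      by (rule tendsto_out_map[OF lim_z ev_pos[OF tr_z] zl(1)])
    show "\<forall>\<^sub>F t in at_top. out_map C (z t) = out_map C (x t)"
      using out by (auto simp: eventually_at_top_linorder intro!: exI[of _ 0])
  qed
  then have "out_map C xl = out_map C zl"
    using tendsto_out_map[OF lim_x ev_pos[OF tr_x] xl(1)] tendsto_unique by force
  then have "rho xl - rho zl \<in> ker_mat C"
    using out_map_eq_iff[OF xl(1) zl(1)] by blast
  moreover have "rho xl - rho zl \<in> orthogonal_comp (stoich_space B)"
    using subspace_diff[OF subspace_orthogonal_comp xl(2) zl(2)] by simp
  ultimately have "rho xl - rho zl = 0"
    using perp by blast
  then have "xl = zl"
    using rho_inject[OF xl(1) zl(1)] by simp
  then show "((\<lambda>t. norm (x t - z t)) \<longlongrightarrow> 0) at_top"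
    using tendsto_norm[OF tendsto_diff[OF lim_x lim_z]] by simp
qed

theorem theorem2:
  fixes B :: "nat^'m^'n" and A :: "real^'m^'m" and C :: "real^'n^'p"
  assumes m_le_n: "CARD('m) \<le> CARD('n)"
    and rankB: "rank (realB B) = CARD('m)"
    and no_zero_row: "\<forall>k. \<exists>j. B $ k $ j \<noteq> 0"
    and A_nonneg: "\<forall>i j. A $ i $ j \<ge> 0"
    and A_irred: "irreducible_matrix A"
    and C_entries: "\<forall>i k. C $ i $ k = 0 \<or> C $ i $ k \<ge> 1"
    and no_bdry_eq: "\<forall>x. x \<in> nonneg_orthant \<and> (\<exists>k. x $ k = 0)
                        \<and> (\<exists>xb \<in> pos_orthant. x - xb \<in> stoich_space B)
                        \<longrightarrow> mak_field A B x \<noteq> 0"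
  defines "Eplus \<equiv> {x \<in> pos_orthant. mak_field A B x = 0}"
  shows "(detectable_pos (mak_field A B) (out_map C)
            \<longleftrightarrow> (\<forall>x\<in>pos_orthant. \<forall>z\<in>pos_orthant.
                   rho x - rho z \<in> ker_mat C \<and> x \<in> Eplus \<and> z \<in> Eplus \<longrightarrow> x = z))
       \<and> ((\<forall>x\<in>pos_orthant. \<forall>z\<in>pos_orthant.
                   rho x - rho z \<in> ker_mat C \<and> x \<in> Eplus \<and> z \<in> Eplus \<longrightarrow> x = z)
            \<longleftrightarrow> orthogonal_comp (stoich_space B) \<inter> ker_mat C = {0})
       \<and> (orthogonal_comp (stoich_space B) \<inter> ker_mat C = {0}
            \<longleftrightarrow> {d + w | d w. d \<in> stoich_space B \<and> w \<in> range (\<lambda>v. transpose C *v v)} = UNIV)"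
proof -
  \<comment> \<open>m_le_n follows from rankB.\<close>
  let ?detectable = "detectable_pos (mak_field A B) (out_map C)"
  let ?separated = "\<forall>x\<in>pos_orthant. \<forall>z\<in>pos_orthant. rho x - rho z \<in> ker_mat C
                      \<and> mak_field A B x = 0 \<and> mak_field A B z = 0 \<longrightarrow> x = z"
  let ?perp = "orthogonal_comp (stoich_space B) \<inter> ker_mat C = {0}"
  obtain e where cb: "complex_balanced A B e"
    using complex_balanced_exists[OF A_nonneg A_irred rankB] by blast
  have "?detectable \<Longrightarrow> ?separated"
    using detectable_imp_equilibria_separated by blast
  moreover have "?separated \<Longrightarrow> ?perp"
    by (rule equilibria_separated_imp_perp_inter_ker_eq_0[OF cb])
  moreover have "?perp \<Longrightarrow> ?detectable"
    by (rule perp_inter_ker_eq_0_imp_detectable[OF A_nonneg A_irred no_bdry_eq cb])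
  moreover have "?perp \<longleftrightarrow>
      {d + w | d w. d \<in> stoich_space B \<and> w \<in> range (\<lambda>v. transpose C *v v)} = UNIV"
    by (rule orthogonal_comp_inter_ker_eq_0_iff) (simp add: stoich_space_def)
  ultimately show ?thesis
    unfolding Eplus_def by blast
qed

end
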